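(* For all $\varepsilon>0$ there exist $c,n_0\in\mathbb{N}$ such that for all primes $p\ge n_0$ the following holds. If $\delta\ge c/\log p$ (with $p^\delta$ an integer), $\mu>0$ and $r=\mu n$ is a positive integer, then every proper $(r,p^{\delta})$-GAP $X\subseteq\mathbb{Z}_p^n$ is a $(\mu n/p^{0.9\delta},\,0.1,\,\varepsilon)$-additive source of entropy rate $\delta\mu$ in $(\mathbb{Z}_p^n,+)$.
   Context: An $(r,s)$-GAP in $\mathbb{Z}_p^n$ is a set $\{b_0+\sum_{i=1}^r a_ib_i: a_i\in\mathbb{Z},\ 0\le a_i\le s-1\}$ with $b_0,\dots,b_r\in\mathbb{Z}_p^n$; proper means all $s^r$ sums are distinct. For $X\subseteq\mathbb{Z}_p^n$, $\mathrm{Sym}_{1-\alpha}(X)=\{g:|X\cap(X+g)|\ge(1-\alpha)|X|\}$, and $X$ is $(\alpha,\beta,\tau)$-additive if $|X+X|\le|X|^{1+\tau}$ and $|\mathrm{Sym}_{1-\alpha}(X)|\ge|X|^{\beta}$. Entropy rate $\delta'$ means $|X|\ge p^{\delta' n}$. *)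

theory Defs
  imports "HOL-Analysis.Analysis" "HOL-Computational_Algebra.Primes"
begin

text \<open>Elements of Z_p^n are represented as functions nat => int whose coordinates
  i < n lie in {0..<p} and which vanish for i >= n.\<close>

definition zpn :: "nat \<Rightarrow> nat \<Rightarrow> (nat \<Rightarrow> int) set" where
  "zpn p n = {v. (\<forall>i<n. 0 \<le> v i \<and> v i < int p) \<and> (\<forall>i\<ge>n. v i = 0)}"

definition vadd :: "nat \<Rightarrow> (nat \<Rightarrow> int) \<Rightarrow> (nat \<Rightarrow> int) \<Rightarrow> (nat \<Rightarrow> int)" where
  "vadd p u v = (\<lambda>i. (u i + v i) mod int p)"

definition sumset :: "nat \<Rightarrow> (nat \<Rightarrow> int) set \<Rightarrow> (nat \<Rightarrow> int) set \<Rightarrow> (nat \<Rightarrow> int) set" where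
  "sumset p A B = {vadd p a b | a b. a \<in> A \<and> b \<in> B}"

definition gap_elem :: "nat \<Rightarrow> nat \<Rightarrow> (nat \<Rightarrow> int) \<Rightarrow> (nat \<Rightarrow> nat \<Rightarrow> int) \<Rightarrow> (nat \<Rightarrow> int) \<Rightarrow> (nat \<Rightarrow> int)" where
  "gap_elem p r b0 b a = (\<lambda>i. (b0 i + (\<Sum>j\<in>{1..r}. a j * b j i)) mod int p)"

definition gap_coeffs :: "nat \<Rightarrow> nat \<Rightarrow> (nat \<Rightarrow> int) set" where
  "gap_coeffs r s = PiE {1..r} (\<lambda>_. {0..<int s})"

definition gap :: "nat \<Rightarrow> nat \<Rightarrow> nat \<Rightarrow> (nat \<Rightarrow> int) \<Rightarrow> (nat \<Rightarrow> nat \<Rightarrow> int) \<Rightarrow> (nat \<Rightarrow> int) set" where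
  "gap p r s b0 b = gap_elem p r b0 b ` gap_coeffs r s"

definition is_proper_gap :: "nat \<Rightarrow> nat \<Rightarrow> nat \<Rightarrow> nat \<Rightarrow> (nat \<Rightarrow> int) set \<Rightarrow> bool" where
  "is_proper_gap p n r s X \<longleftrightarrow>
     (\<exists>b0 b. b0 \<in> zpn p n \<and> (\<forall>j\<in>{1..r}. b j \<in> zpn p n) \<and>
            X = gap p r s b0 b \<and> inj_on (gap_elem p r b0 b) (gap_coeffs r s))"

definition Sym :: "nat \<Rightarrow> nat \<Rightarrow> real \<Rightarrow> (nat \<Rightarrow> int) set \<Rightarrow> (nat \<Rightarrow> int) set" where
  "Sym p n \<alpha> X = {g \<in> zpn p n. real (card (X \<inter> (\<lambda>x. vadd p x g) ` X)) \<ge> (1 - \<alpha>) * real (card X)}"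

definition additive :: "nat \<Rightarrow> nat \<Rightarrow> real \<Rightarrow> real \<Rightarrow> real \<Rightarrow> (nat \<Rightarrow> int) set \<Rightarrow> bool" where
  "additive p n \<alpha> \<beta> \<tau> X \<longleftrightarrow>
     real (card (sumset p X X)) \<le> real (card X) powr (1 + \<tau>) \<and>
     real (card (Sym p n \<alpha> X)) \<ge> real (card X) powr \<beta>"

definition entropy_rate :: "nat \<Rightarrow> nat \<Rightarrow> real \<Rightarrow> (nat \<Rightarrow> int) set \<Rightarrow> bool" where
  "entropy_rate p n \<delta>' X \<longleftrightarrow> real (card X) \<ge> real p powr (\<delta>' * real n)"

end

theory Submission
  imports Defs
begin

text \<open>A proper \<open>(r,s)\<close>-GAP has \<open>s^r\<close> elements, and \<open>X + X\<close> lies in the \<open>(r, 2s-1)\<close>-GAP with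
  base point \<open>2b\<^sub>0\<close>, so \<open>|X + X| \<le> 2^r |X| \<le> |X|^(1+\<epsilon>)\<close> once \<open>s^\<epsilon> \<ge> 2\<close>, which
  \<open>\<delta> \<ge> c / log p\<close> guarantees. For a shift \<open>g = \<Sum> a'\<^sub>j b\<^sub>j\<close> with \<open>0 \<le> a'\<^sub>j \<le> t = \<lfloor>s^0.1\<rfloor>\<close>,
  \<open>X \<inter> (X + g)\<close> contains the translates by \<open>g\<close> of the \<open>(s - t)^r \<ge> (1 - rt/s) s^r\<close> elements
  of \<open>X\<close> with all coefficients below \<open>s - t\<close> (Bernoulli's inequality), so \<open>g\<close> lies in
  \<open>Sym\<^sub>1\<^sub>-\<^sub>\<alpha>(X)\<close> for \<open>\<alpha> \<ge> r/s^0.9\<close>; properness makes these \<open>(t+1)^r \<ge> |X|^0.1\<close> shifts distinct.\<close>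

lemma finite_zpn: "finite (zpn p n)"
proof -
  have "zpn p n \<subseteq> {f. \<forall>i. (i \<in> {..<n} \<longrightarrow> f i \<in> {0..<int p}) \<and> (i \<notin> {..<n} \<longrightarrow> f i = 0)}"
    by (auto simp: zpn_def)
  then show ?thesis
    by (rule finite_subset) (intro finite_set_of_finite_funs; simp)
qed

lemma finite_gap_coeffs: "finite (gap_coeffs r s)"
  by (simp add: gap_coeffs_def finite_PiE)

lemma card_gap_coeffs: "card (gap_coeffs r s) = s ^ r"
  by (simp add: gap_coeffs_def card_PiE)

lemma gap_coeffs_mono: "u \<le> s \<Longrightarrow> gap_coeffs r u \<subseteq> gap_coeffs r s"
  unfolding gap_coeffs_def by (intro PiE_mono) auto

lemma gap_coeffs_add_restrict:
  assumes "a \<in> gap_coeffs r u" "a' \<in> gap_coeffs r v" "0 < u" "0 < v"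
  shows "restrict (\<lambda>j. a j + a' j) {1..r} \<in> gap_coeffs r (u + v - 1)"
proof -
  have "a j + a' j \<in> {0..<int (u + v - 1)}" if "j \<in> {1..r}" for j
    using PiE_mem[OF assms(1)[unfolded gap_coeffs_def] that]
      PiE_mem[OF assms(2)[unfolded gap_coeffs_def] that] assms(3,4) by auto
  then show ?thesis unfolding gap_coeffs_def by auto
qed

lemma gap_elem_cong:
  "(\<And>j. j \<in> {1..r} \<Longrightarrow> a j = a' j) \<Longrightarrow> gap_elem p r b0 b a = gap_elem p r b0 b a'"
  unfolding gap_elem_def by (intro ext arg_cong2[where f = "(mod)"] arg_cong2[where f = "(+)"] sum.cong) auto

lemma vadd_gap_elem:
  "vadd p (gap_elem p r b0 b a) (gap_elem p r b1 b a') =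
   gap_elem p r (\<lambda>i. b0 i + b1 i) b (restrict (\<lambda>j. a j + a' j) {1..r})"
proof -
  have "vadd p (gap_elem p r b0 b a) (gap_elem p r b1 b a') =
        gap_elem p r (\<lambda>i. b0 i + b1 i) b (\<lambda>j. a j + a' j)"
    unfolding vadd_def gap_elem_def by (rule ext) (simp add: mod_add_eq sum.distrib algebra_simps)
  also have "\<dots> = gap_elem p r (\<lambda>i. b0 i + b1 i) b (restrict (\<lambda>j. a j + a' j) {1..r})"
    by (rule gap_elem_cong) simp
  finally show ?thesis .
qed

lemma vadd_gap_elem_zero: "vadd p b0 (gap_elem p r (\<lambda>_. 0) b a) = gap_elem p r b0 b a"
  unfolding vadd_def gap_elem_def by (rule ext) (simp add: mod_add_right_eq)

lemma gap_elem_zero_in_zpn: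
  assumes "p > 0" "\<forall>j\<in>{1..r}. b j \<in> zpn p n"
  shows "gap_elem p r (\<lambda>_. 0) b a \<in> zpn p n"
  using assms unfolding zpn_def gap_elem_def by simp

lemma card_sumset_gap_le:
  assumes "s > 0"
  shows "card (sumset p (gap p r s b0 b) (gap p r s b0 b)) \<le> (2 * s - 1) ^ r"
proof -
  have "sumset p (gap p r s b0 b) (gap p r s b0 b) \<subseteq> gap p r (2 * s - 1) (\<lambda>i. b0 i + b0 i) b"
  proof
    fix z assume "z \<in> sumset p (gap p r s b0 b) (gap p r s b0 b)"
    then obtain a a' where a: "a \<in> gap_coeffs r s" "a' \<in> gap_coeffs r s"
      and z: "z = vadd p (gap_elem p r b0 b a) (gap_elem p r b0 b a')"
      unfolding sumset_def gap_def by blast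
    have "restrict (\<lambda>j. a j + a' j) {1..r} \<in> gap_coeffs r (2 * s - 1)"
      using gap_coeffs_add_restrict[OF a] assms by (simp add: mult_2)
    then show "z \<in> gap p r (2 * s - 1) (\<lambda>i. b0 i + b0 i) b"
      unfolding z vadd_gap_elem gap_def by (rule imageI)
  qed
  then have "card (sumset p (gap p r s b0 b) (gap p r s b0 b)) \<le> card (gap p r (2 * s - 1) (\<lambda>i. b0 i + b0 i) b)"
    by (intro card_mono) (simp_all add: gap_def finite_gap_coeffs)
  also have "\<dots> \<le> (2 * s - 1) ^ r"
    unfolding gap_def by (metis card_gap_coeffs card_image_le finite_gap_coeffs)
  finally show ?thesis .
qed

lemma card_proper_gap:
  assumes "inj_on (gap_elem p r b0 b) (gap_coeffs r s)"
  shows "card (gap p r s b0 b) = s ^ r"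
  using assms by (simp add: gap_def card_image card_gap_coeffs)

lemma card_gap_inter_shift_ge:
  assumes inj: "inj_on (gap_elem p r b0 b) (gap_coeffs r s)"
    and a': "a' \<in> gap_coeffs r (t + 1)" and "t < s"
  defines "X \<equiv> gap p r s b0 b" and "g \<equiv> gap_elem p r (\<lambda>_. 0) b a'"
  shows "(s - t) ^ r \<le> card (X \<inter> (\<lambda>x. vadd p x g) ` X)"
proof -
  define h where "h = (\<lambda>a. restrict (\<lambda>j. a j + a' j) {1..r})"
  have "h a \<in> gap_coeffs r s" if "a \<in> gap_coeffs r (s - t)" for a
    using gap_coeffs_add_restrict[OF that a'] \<open>t < s\<close> by (simp add: h_def)
  then have hD: "h ` gap_coeffs r (s - t) \<subseteq> gap_coeffs r s"
    by blast
  have "inj_on h (gap_coeffs r (s - t))"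
  proof (rule inj_onI)
    fix x y assume x: "x \<in> gap_coeffs r (s - t)" and y: "y \<in> gap_coeffs r (s - t)"
      and "h x = h y"
    have "x j = y j" if "j \<in> {1..r}" for j
      using fun_cong[OF \<open>h x = h y\<close>, of j] that by (simp add: h_def)
    then show "x = y"
      using PiE_ext x y unfolding gap_coeffs_def by metis
  qed
  then have "inj_on (\<lambda>a. gap_elem p r b0 b (h a)) (gap_coeffs r (s - t))"
    using comp_inj_on[OF _ inj_on_subset[OF inj hD]] by (simp add: comp_def)
  then have "(s - t) ^ r = card ((\<lambda>a. gap_elem p r b0 b (h a)) ` gap_coeffs r (s - t))"
    by (simp add: card_image card_gap_coeffs)
  also have "\<dots> \<le> card (X \<inter> (\<lambda>x. vadd p x g) ` X)"
  proof (intro card_mono)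
    show "finite (X \<inter> (\<lambda>x. vadd p x g) ` X)"
      by (simp add: X_def gap_def finite_gap_coeffs)
    show "(\<lambda>a. gap_elem p r b0 b (h a)) ` gap_coeffs r (s - t) \<subseteq> X \<inter> (\<lambda>x. vadd p x g) ` X"
    proof (intro image_subsetI IntI)
      fix a assume a: "a \<in> gap_coeffs r (s - t)"
      show "gap_elem p r b0 b (h a) \<in> X"
        using hD a unfolding X_def gap_def by blast
      have "gap_elem p r b0 b a \<in> X"
        using gap_coeffs_mono[of "s - t" s r] a unfolding X_def gap_def by auto
      moreover have "gap_elem p r b0 b (h a) = vadd p (gap_elem p r b0 b a) g"
        by (simp add: g_def h_def vadd_gap_elem)
      ultimately show "gap_elem p r b0 b (h a) \<in> (\<lambda>x. vadd p x g) ` X"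
        by blast
    qed
  qed
  finally show ?thesis .
qed

lemma inj_on_gap_elem_zero:
  assumes "inj_on (gap_elem p r b0 b) (gap_coeffs r s)" "u \<le> s"
  shows "inj_on (gap_elem p r (\<lambda>_. 0) b) (gap_coeffs r u)"
proof (rule inj_on_imageI2)
  show "inj_on (vadd p b0 \<circ> gap_elem p r (\<lambda>_. 0) b) (gap_coeffs r u)"
    using inj_on_subset[OF assms(1) gap_coeffs_mono[OF assms(2)]]
    by (simp add: comp_def vadd_gap_elem_zero)
qed

lemma power_powr_commute:
  fixes x :: real
  assumes "0 < x"
  shows "(x ^ n) powr a = (x powr a) ^ n"
proof -
  have "x ^ n = x powr real n"
    using assms by (simp add: powr_realpow)
  then show ?thesis
    using assms by (simp add: powr_powr powr_power)
qed

lemma Bernoulli_power_diff: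
  fixes s t :: real
  assumes "0 \<le> t" "t \<le> s"
  shows "(1 - real r * t / s) * s ^ r \<le> (s - t) ^ r"
proof (cases "s = 0")
  case False
  then have "s > 0" using assms by simp
  have "1 - real r * t / s \<le> (1 + - (t / s)) ^ r"
    using Bernoulli_inequality[of "- (t / s)" r] assms \<open>s > 0\<close> by simp
  then have "(1 - real r * t / s) * s ^ r \<le> (1 - t / s) ^ r * s ^ r"
    using \<open>s > 0\<close> by (intro mult_right_mono) simp_all
  also have "\<dots> = ((1 - t / s) * s) ^ r"
    by (simp add: power_mult_distrib)
  also have "(1 - t / s) * s = s - t" using \<open>s > 0\<close> by (simp add: field_simps)
  finally show ?thesis .
qed (use assms in \<open>cases r; simp\<close>)

lemma card_Sym_proper_gap_ge:
  assumes "p > 0" "\<forall>j\<in>{1..r}. b j \<in> zpn p n"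
    and inj: "inj_on (gap_elem p r b0 b) (gap_coeffs r s)"
    and "t < s" "real r * real t / real s \<le> \<alpha>"
  shows "(t + 1) ^ r \<le> card (Sym p n \<alpha> (gap p r s b0 b))"
proof -
  let ?X = "gap p r s b0 b"
  have "gap_elem p r (\<lambda>_. 0) b ` gap_coeffs r (t + 1) \<subseteq> Sym p n \<alpha> ?X"
  proof
    fix g assume "g \<in> gap_elem p r (\<lambda>_. 0) b ` gap_coeffs r (t + 1)"
    then obtain a' where a': "a' \<in> gap_coeffs r (t + 1)" and g: "g = gap_elem p r (\<lambda>_. 0) b a'"
      by blast
    have "(1 - \<alpha>) * real (card ?X) \<le> (1 - real r * real t / real s) * real s ^ r"
      using assms(5) by (simp add: card_proper_gap[OF inj] mult_right_mono)
    also have "\<dots> \<le> (real s - real t) ^ r"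
      using \<open>t < s\<close> by (intro Bernoulli_power_diff) auto
    also have "\<dots> = real ((s - t) ^ r)"
      using \<open>t < s\<close> by simp
    also have "\<dots> \<le> real (card (?X \<inter> (\<lambda>x. vadd p x g) ` ?X))"
      using card_gap_inter_shift_ge[OF inj a' \<open>t < s\<close>] g by simp
    finally show "g \<in> Sym p n \<alpha> ?X"
      using gap_elem_zero_in_zpn[OF assms(1,2)] g by (simp add: Sym_def)
  qed
  then have "card (gap_elem p r (\<lambda>_. 0) b ` gap_coeffs r (t + 1)) \<le> card (Sym p n \<alpha> ?X)"
    by (intro card_mono finite_subset[OF _ finite_zpn]) (auto simp: Sym_def)
  moreover have "inj_on (gap_elem p r (\<lambda>_. 0) b) (gap_coeffs r (t + 1))"
    using inj_on_gap_elem_zero[OF inj] \<open>t < s\<close> by simp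
  ultimately show ?thesis
    by (simp add: card_image card_gap_coeffs)
qed

lemma proper_gap_additive:
  assumes gap: "is_proper_gap p n r s X" and "p > 0"
    and s_eps: "2 \<le> real s powr \<epsilon>" and \<alpha>: "real r / real s powr 0.9 \<le> \<alpha>"
  shows "additive p n \<alpha> 0.1 \<epsilon> X"
proof -
  obtain b0 b where b: "\<forall>j\<in>{1..r}. b j \<in> zpn p n" and X: "X = gap p r s b0 b"
    and inj: "inj_on (gap_elem p r b0 b) (gap_coeffs r s)"
    using gap unfolding is_proper_gap_def by blast
  have "s \<ge> 2"
  proof (rule ccontr)
    assume "\<not> s \<ge> 2"
    then have "s = 0 \<or> s = 1" by linarith
    then show False using s_eps by auto
  qed
  then have s_pos: "real s > 0" by simp
  have cardX: "real (card X) = real s ^ r"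
    using card_proper_gap[OF inj] X by simp
  have "card (sumset p X X) \<le> (2 * s - 1) ^ r"
    using card_sumset_gap_le[of s p r b0 b] \<open>s \<ge> 2\<close> X by simp
  then have "real (card (sumset p X X)) \<le> real ((2 * s - 1) ^ r)"
    by (simp only: of_nat_le_iff)
  also have "\<dots> \<le> real ((2 * s) ^ r)"
    by (intro of_nat_mono power_mono) auto
  also have "\<dots> = (2 * real s) ^ r"
    by simp
  also have "\<dots> \<le> (real s powr \<epsilon> * real s) ^ r"
    using s_eps by (intro power_mono mult_right_mono) simp_all
  also have "\<dots> = real (card X) powr \<epsilon> * real (card X)"
    using s_pos by (simp add: cardX power_mult_distrib power_powr_commute)
  also have "\<dots> = real (card X) powr (1 + \<epsilon>)"
    by (simp add: cardX powr_add)
  finally have sumset: "real (card (sumset p X X)) \<le> real (card X) powr (1 + \<epsilon>)" .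
  define t where "t = nat \<lfloor>real s powr 0.1\<rfloor>"
  have t_le: "real t \<le> real s powr 0.1" and t_gt: "real s powr 0.1 < real t + 1"
    by (simp_all add: t_def)
  have "real s powr 0.1 < real s powr 1"
    using \<open>s \<ge> 2\<close> by (intro powr_less_mono) auto
  then have "t < s" using t_le s_pos by simp
  have "real r * real t / real s \<le> real r * real s powr 0.1 / real s"
    using t_le by (intro divide_right_mono mult_left_mono) auto
  also have "\<dots> = real r / real s powr 0.9"
    using s_pos by (simp add: field_simps flip: powr_add)
  finally have "(t + 1) ^ r \<le> card (Sym p n \<alpha> X)"
    using card_Sym_proper_gap_ge[OF \<open>p > 0\<close> b inj \<open>t < s\<close>] \<alpha> X by simp
  then have "real ((t + 1) ^ r) \<le> real (card (Sym p n \<alpha> X))"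
    by (simp only: of_nat_le_iff)
  moreover have "real (card X) powr 0.1 = (real s powr 0.1) ^ r"
    using s_pos by (simp add: cardX power_powr_commute)
  moreover have "(real s powr 0.1) ^ r \<le> real ((t + 1) ^ r)"
    using t_gt by (simp add: add.commute power_mono)
  ultimately have "real (card X) powr 0.1 \<le> real (card (Sym p n \<alpha> X))"
    by linarith
  with sumset show ?thesis by (simp add: additive_def)
qed

lemma proper_gap_entropy_rate:
  assumes "is_proper_gap p n r s X" "real s = real p powr \<delta>" "real r = \<mu> * real n" "p > 0"
  shows "entropy_rate p n (\<delta> * \<mu>) X"
proof -
  obtain b0 b where "X = gap p r s b0 b" "inj_on (gap_elem p r b0 b) (gap_coeffs r s)"
    using assms(1) unfolding is_proper_gap_def by blast
  then have "real (card X) = (real p powr \<delta>) ^ r"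
    using card_proper_gap assms(2) by simp
  also have "\<dots> = real p powr (\<delta> * \<mu> * real n)"
    using assms(3,4) by (simp add: powr_powr powr_power mult.commute mult.left_commute)
  finally show ?thesis by (simp add: entropy_rate_def)
qed

lemma prime_proper_gap_additive_entropy_rate:
  assumes "prime p" "1 \<le> real c * \<epsilon>" "\<epsilon> > 0" "\<delta> \<ge> real c / ln (real p)"
    and s: "real s = real p powr \<delta>" and r: "real r = \<mu> * real n" and gap: "is_proper_gap p n r s X"
  shows "additive p n (\<mu> * real n / real p powr (0.9 * \<delta>)) 0.1 \<epsilon> X \<and>
    entropy_rate p n (\<delta> * \<mu>) X"
proof -
  have "real p > 1" using prime_gt_1_nat[OF \<open>prime p\<close>] by simp
  then have "real c \<le> \<delta> * ln (real p)"
    using assms(4) by (simp add: divide_le_eq)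
  then have "real c * \<epsilon> \<le> \<delta> * ln (real p) * \<epsilon>"
    using \<open>\<epsilon> > 0\<close> by (simp add: mult_right_mono)
  then have "1 \<le> \<epsilon> * \<delta> * ln (real p)"
    using assms(2) by (simp add: mult.commute mult.left_commute)
  moreover have "real s powr \<epsilon> = exp (\<epsilon> * \<delta> * ln (real p))"
    using \<open>real p > 1\<close> by (simp add: s powr_powr powr_def mult_ac)
  ultimately have "2 \<le> real s powr \<epsilon>"
    using exp_ge_add_one_self[of "\<epsilon> * \<delta> * ln (real p)"] by linarith
  moreover have "real r / real s powr 0.9 = \<mu> * real n / real p powr (0.9 * \<delta>)"
    by (simp add: s r powr_powr mult.commute)
  ultimately show ?thesis
    using proper_gap_additive[OF gap] proper_gap_entropy_rate[OF gap s r] \<open>real p > 1\<close> by simp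
qed

theorem lemma4p1:
  "\<forall>\<epsilon>::real. \<epsilon> > 0 \<longrightarrow>
    (\<exists>c n0 :: nat. \<forall>p::nat. prime p \<and> p \<ge> n0 \<longrightarrow>
      (\<forall>(n::nat) (\<delta>::real) (\<mu>::real) (r::nat) (s::nat) X.
         \<delta> \<ge> real c / ln (real p) \<and> real s = real p powr \<delta> \<and>
         \<mu> > 0 \<and> real r = \<mu> * real n \<and> r > 0 \<and>
         is_proper_gap p n r s X \<longrightarrow>
         additive p n (\<mu> * real n / real p powr (0.9 * \<delta>)) 0.1 \<epsilon> X \<and>
         entropy_rate p n (\<delta> * \<mu>) X))"
proof -
  have "\<exists>c::nat. 1 \<le> real c * \<epsilon>" if "\<epsilon> > 0" for \<epsilon> :: real
  proof -
    obtain c :: nat where "1 / \<epsilon> < real c"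
      using reals_Archimedean2 by blast
    then have "1 < real c * \<epsilon>"
      using that by (simp add: divide_less_eq)
    then show ?thesis by (intro exI[of _ c]) simp
  qed
  then show ?thesis
    using prime_proper_gap_additive_entropy_rate by metis
qed

end
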